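(* Let $n\geq 16$ and let $D\subseteq X^n$ be a set such that any two distinct words of $D$ are at Hamming distance $3$ or $4$. Then $|D|\leq n$.
   Context: $X^n$ is the set of words of length $n$ over the alphabet $\{*,0,1\}$ containing exactly one symbol $*$. The Hamming distance between two words is the number of coordinates in which they differ. *)

theory Defs
  imports Main
begin

datatype sym = Star | Zero | One

definition X :: "nat \<Rightarrow> sym list set" where
  "X n = {w. length w = n \<and> card {i. i < n \<and> w ! i = Star} = 1}"

definition hamming :: "sym list \<Rightarrow> sym list \<Rightarrow> nat" where
  "hamming u v = card {i. i < length u \<and> u ! i \<noteq> v ! i}"

end

theory Submission
  imports Defs
begin

text \<open>
  Sort the words by the position of their star; if all stars differ there are at most \<open>n\<close>
  words. Otherwise take \<open>u \<noteq> u'\<close> with a common star \<open>p\<close>, let \<open>S\<close> be the 3 or 4 positions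
  where they differ and \<open>T\<close> the positions outside \<open>S \<union> {p}\<close>. Away from the stars all words are
  binary, so a word \<open>a\<close> is determined relative to \<open>u\<close> by its star and the sets \<open>Q a \<subseteq> S\<close>,
  \<open>M a \<subseteq> T\<close> where it differs from \<open>u\<close>, and its distances to \<open>u\<close> and \<open>u'\<close> are explicit in
  \<open>|Q a|\<close> and \<open>|M a|\<close>.

  If every star class has at most two words, the classes at \<open>p\<close> and at the points of \<open>S\<close>
  contribute at most 10 words and those with star in \<open>T\<close> at most 6. Otherwise some class has
  three words, two of which are at distance 4, because a common star makes the three distances
  sum to an even number. So we may assume \<open>|S| = 4\<close> and that the class of \<open>p\<close> contains a
  third word. If one such word \<open>y\<close> has \<open>|M y| = 2\<close>, at most two words have their star off \<open>p\<close>
  and at most \<open>|T| + 1\<close> further words have star \<open>p\<close>, so \<open>|D| \<le> |T| + 5 = n\<close>. Otherwise all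
  of them have \<open>|M y| = 1\<close>, and a finer count of the three kinds of stars gives \<open>|D| \<le> 16\<close>.
\<close>

section \<open>Finite sets\<close>

lemma card_sym_diff:
  assumes "finite A" "finite B"
  shows "card (sym_diff A B) + 2 * card (A \<inter> B) = card A + card B"
proof -
  have "card (sym_diff A B) = card (A - B) + card (B - A)"
    using assms by (intro card_Un_disjoint) auto
  moreover have "card A = card (A \<inter> B) + card (A - B)" "card B = card (A \<inter> B) + card (B - A)"
    using card_Int_Diff[OF assms(1), of B] card_Int_Diff[OF assms(2), of A] by (simp_all add: Int_commute)
  ultimately show ?thesis by simp
qed

lemma eq_if_card_sym_diff_le_1:
  assumes "finite A" "finite B" "card A = card B" "card (sym_diff A B) \<le> 1"
  shows "A = B"
proof -
  have "card (sym_diff A B) = 0"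
    using card_sym_diff[OF assms(1,2)] assms(3,4) by presburger
  then show ?thesis using assms(1,2) by auto
qed

lemma obtain_three_distinct:
  assumes "3 \<le> card F"
  obtains x y z where "x \<in> F" "y \<in> F" "z \<in> F" "x \<noteq> y" "x \<noteq> z" "y \<noteq> z"
proof -
  have "Suc (Suc (Suc 0)) \<le> card F" using assms by simp
  then show ?thesis using that unfolding card_le_Suc_iff by auto
qed

lemma card_le_2_if_no_three_distinct:
  assumes "\<And>x y z. x \<in> F \<Longrightarrow> y \<in> F \<Longrightarrow> z \<in> F \<Longrightarrow> x \<noteq> y \<Longrightarrow> x \<noteq> z \<Longrightarrow> y \<noteq> z \<Longrightarrow> False"
  shows "card F \<le> 2"
proof (rule ccontr)
  assume "\<not> card F \<le> 2"
  then have "3 \<le> card F" by simp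
  then obtain x y z where "x \<in> F" "y \<in> F" "z \<in> F" "x \<noteq> y" "x \<noteq> z" "y \<noteq> z"
    by (rule obtain_three_distinct)
  then show False by (rule assms)
qed

lemma obtain_two_distinct:
  assumes "2 \<le> card F"
  obtains x y where "x \<in> F" "y \<in> F" "x \<noteq> y"
proof -
  have "Suc (Suc 0) \<le> card F" using assms by simp
  then show ?thesis using that unfolding card_le_Suc_iff by auto
qed

lemma card_split_disjoint3:
  assumes "finite Z" "Z \<subseteq> A \<union> B \<union> C" "A \<inter> B = {}" "A \<inter> C = {}" "B \<inter> C = {}"
  shows "card Z = card (Z \<inter> A) + card (Z \<inter> B) + card (Z \<inter> C)"
proof -
  have "Z = (Z \<inter> A) \<union> (Z \<inter> B) \<union> (Z \<inter> C)" using assms(2) by blast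
  moreover have "card ((Z \<inter> A) \<union> (Z \<inter> B) \<union> (Z \<inter> C)) = card (Z \<inter> A) + card (Z \<inter> B) + card (Z \<inter> C)"
    using assms(1,3-5) by (subst card_Un_disjoint; auto simp: card_Un_disjoint)+
  ultimately show ?thesis by simp
qed

lemma card_UN_le_mult:
  assumes "finite I" "\<And>i. i \<in> I \<Longrightarrow> card (A i) \<le> k"
  shows "card (\<Union>i\<in>I. A i) \<le> card I * k"
  using card_UN_le[OF assms(1), of A] sum_bounded_above[of I "\<lambda>i. card (A i)" k] assms(2) by simp

lemma card_small_subsets_containing:
  assumes "finite S" "s0 \<in> S" "card S = 3 \<or> card S = 4"
  shows "card {A. A \<subseteq> S \<and> s0 \<in> A \<and> card A \<le> 2 \<and> card (S - A) \<le> 2} \<le> 3"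
    (is "card ?R \<le> 3")
proof -
  let ?P = "(\<lambda>x. {s0, x}) ` (S - {s0})"
  have R_subset: "?R \<subseteq> insert {s0} ?P"
  proof
    fix A assume "A \<in> ?R"
    then have A: "A \<subseteq> S" "s0 \<in> A" "card (A - {s0}) \<le> Suc 0"
      using assms(1) finite_subset by (auto simp: card_Diff_singleton)
    then have "\<forall>x\<in>A - {s0}. \<forall>y\<in>A - {s0}. x = y"
      using card_le_Suc0_iff_eq assms(1) finite_subset by (metis finite_Diff)
    then show "A \<in> insert {s0} ?P" using A(1,2) by blast
  qed
  have "card ?P \<le> card S - 1"
    using card_image_le[of "S - {s0}"] assms(1,2) by simp
  show ?thesis
  proof (cases "card S = 4")
    case True
    then have "{s0} \<notin> ?R" using assms(1,2) by simp
    then have "?R \<subseteq> ?P" using R_subset by blast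
    then have "card ?R \<le> card ?P" using assms(1) by (intro card_mono) auto
    then show ?thesis using \<open>card ?P \<le> card S - 1\<close> True by simp
  next
    case False
    have "card ?R \<le> card (insert {s0} ?P)" using R_subset assms(1) by (intro card_mono) auto
    also have "\<dots> \<le> Suc (card ?P)" by (rule card_insert_le_m1) (use assms(1) in auto)
    finally show ?thesis using \<open>card ?P \<le> card S - 1\<close> False assms(3) by simp
  qed
qed

lemma card_sym_diff_of_2_subsets:
  assumes "finite S" "card S = 4" "A \<subseteq> S" "B \<subseteq> S" "card A = 2" "card B = 2"
    and "B \<noteq> A" "B \<noteq> S - A"
  shows "card (sym_diff B A) = 2"
proof -
  have fin: "finite A" "finite B" using assms(1,3,4) finite_subset by auto
  have "card (B \<inter> A) \<noteq> 2"
  proof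
    assume "card (B \<inter> A) = 2"
    then have "B \<inter> A = B" "B \<inter> A = A"
      using card_subset_eq[OF fin(2), of "B \<inter> A"] card_subset_eq[OF fin(1), of "B \<inter> A"] assms(5,6)
      by auto
    then show False using assms(7) by simp
  qed
  moreover have "card (B \<inter> A) \<noteq> 0"
  proof
    assume "card (B \<inter> A) = 0"
    then have "B \<subseteq> S - A" using fin assms(4) by auto
    moreover have "card (S - A) = 2" using assms(1-3,5) fin by (simp add: card_Diff_subset)
    ultimately show False using card_subset_eq[of "S - A" B] assms(1,6,8) by auto
  qed
  moreover have "card (B \<inter> A) \<le> 2" using card_mono[OF fin(2), of "B \<inter> A"] assms(6) by simp
  ultimately show ?thesis using card_sym_diff[OF fin(2,1)] assms(5,6) by linarith
qed

section \<open>Codes with distances 3 and 4\<close>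

lemma neq_iff_xor_neq:
  "a \<noteq> Star \<Longrightarrow> b \<noteq> Star \<Longrightarrow> c \<noteq> Star \<Longrightarrow> b \<noteq> c \<longleftrightarrow> (a \<noteq> b) \<noteq> (a \<noteq> c)"
  by (cases a; cases b; cases c) auto

lemma finite_X: "finite (X n)"
proof -
  have "(UNIV :: sym set) = {Star, Zero, One}"
    using sym.exhaust by auto
  then have "finite (UNIV :: sym set)" by (metis finite.emptyI finite.insertI)
  then have "finite {xs :: sym list. set xs \<subseteq> UNIV \<and> length xs = n}"
    by (rule finite_lists_length_eq)
  then show ?thesis unfolding X_def by (rule finite_subset[rotated]) auto
qed

locale code34 =
  fixes n :: nat and D :: "sym list set"
  assumes D_subset_X: "D \<subseteq> X n"
    and dist_3_or_4: "\<forall>u\<in>D. \<forall>v\<in>D. u \<noteq> v \<longrightarrow> hamming u v = 3 \<or> hamming u v = 4"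
begin

definition diffs :: "sym list \<Rightarrow> sym list \<Rightarrow> nat set" where
  "diffs a b = {i. i < n \<and> a ! i \<noteq> b ! i}"

definition star :: "sym list \<Rightarrow> nat" where
  "star w = (THE i. i < n \<and> w ! i = Star)"

definition star_class :: "nat \<Rightarrow> sym list set" where
  "star_class r = {w \<in> D. star w = r}"

lemma finite_D: "finite D"
  using D_subset_X finite_X finite_subset by blast

lemma finite_star_class: "finite (star_class r)"
  using finite_D unfolding star_class_def by simp

lemma Star_iff_star:
  assumes "w \<in> D"
  shows "i < n \<and> w ! i = Star \<longleftrightarrow> i = star w"
proof -
  obtain k where k: "{i. i < n \<and> w ! i = Star} = {k}"
    using assms D_subset_X unfolding X_def by (auto simp: card_1_singleton_iff)
  then have "\<And>i. i < n \<and> w ! i = Star \<longleftrightarrow> i = k" by blast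
  then show ?thesis unfolding star_def by simp
qed

lemma star_less: "w \<in> D \<Longrightarrow> star w < n"
  and nth_star: "w \<in> D \<Longrightarrow> w ! star w = Star"
  and nth_neq_Star: "w \<in> D \<Longrightarrow> i < n \<Longrightarrow> i \<noteq> star w \<Longrightarrow> w ! i \<noteq> Star"
  using Star_iff_star by blast+

lemma mem_diffs: "i \<in> diffs a b \<longleftrightarrow> i < n \<and> a ! i \<noteq> b ! i"
  unfolding diffs_def by simp

lemma finite_diffs: "finite (diffs a b)"
  and diffs_subset: "diffs a b \<subseteq> {..<n}"
  unfolding diffs_def by auto

lemma card_diffs_3_or_4:
  assumes "a \<in> D" "b \<in> D" "a \<noteq> b"
  shows "card (diffs a b) = 3 \<or> card (diffs a b) = 4"
proof -
  have "hamming a b = card (diffs a b)"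
    using assms(1) D_subset_X unfolding hamming_def diffs_def X_def by auto
  then show ?thesis using dist_3_or_4 assms by metis
qed

lemma card_diffs_le_4: "a \<in> D \<Longrightarrow> b \<in> D \<Longrightarrow> card (diffs a b) \<le> 4"
  using card_diffs_3_or_4[of a b] by (cases "a = b") (auto simp: diffs_def)

lemma eq_if_card_diffs_le_2: "a \<in> D \<Longrightarrow> b \<in> D \<Longrightarrow> card (diffs a b) \<le> 2 \<Longrightarrow> a = b"
  using card_diffs_3_or_4 by fastforce

lemma eq_if_diffs_subset_pair:
  assumes "a \<in> D" "b \<in> D" "diffs a b \<subseteq> {x, y}"
  shows "a = b"
proof -
  have "card (diffs a b) \<le> card {x, y}" using assms(3) by (intro card_mono) auto
  also have "\<dots> \<le> 2" by (cases "x = y") auto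
  finally show ?thesis using eq_if_card_diffs_le_2 assms by simp
qed

lemma star_in_diffs:
  assumes "a \<in> D" "b \<in> D" "star a \<noteq> star b"
  shows "star a \<in> diffs a b" "star b \<in> diffs a b"
  using assms star_less nth_star nth_neq_Star unfolding diffs_def by (metis (mono_tags) mem_Collect_eq)+

lemma star_notin_diffs: "a \<in> D \<Longrightarrow> b \<in> D \<Longrightarrow> star a = star b \<Longrightarrow> star a \<notin> diffs a b"
  using nth_star[of a] nth_star[of b] unfolding diffs_def by simp

text \<open>Away from the stars the words are binary, so differences add up modulo 2.\<close>

lemma mem_diffs_xor:
  assumes "a \<in> D" "b \<in> D" "c \<in> D" "i < n" "i \<noteq> star a" "i \<noteq> star b" "i \<noteq> star c"
  shows "i \<in> diffs b c \<longleftrightarrow> (i \<in> diffs a b) \<noteq> (i \<in> diffs a c)"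
  using assms neq_iff_xor_neq nth_neq_Star unfolding diffs_def by simp

lemma nth_eq_if_both_neq:
  assumes "a \<in> D" "b \<in> D" "c \<in> D" "i < n" "i \<noteq> star a" "i \<noteq> star b" "i \<noteq> star c"
    and "a ! i \<noteq> b ! i" "a ! i \<noteq> c ! i"
  shows "b ! i = c ! i"
  using mem_diffs_xor[OF assms(1-7)] assms(4,8,9) unfolding diffs_def by simp

lemma card_le_2_if_pairwise_nth_neq:
  assumes "F \<subseteq> D" "i < n" "\<And>a. a \<in> F \<Longrightarrow> star a \<noteq> i"
    and "\<And>a b. a \<in> F \<Longrightarrow> b \<in> F \<Longrightarrow> a \<noteq> b \<Longrightarrow> a ! i \<noteq> b ! i"
  shows "card F \<le> 2"
proof (rule card_le_2_if_no_three_distinct)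
  fix x y z assume "x \<in> F" "y \<in> F" "z \<in> F" "x \<noteq> y" "x \<noteq> z" "y \<noteq> z"
  then show False
    using nth_eq_if_both_neq[of x y z i] assms by (metis subsetD)
qed

lemma diffs_same_star:
  assumes "a \<in> D" "b \<in> D" "c \<in> D" "star b = star a" "star c = star a"
  shows "diffs b c = sym_diff (diffs a b) (diffs a c)"
proof (rule set_eqI)
  fix i
  show "i \<in> diffs b c \<longleftrightarrow> i \<in> sym_diff (diffs a b) (diffs a c)"
  proof (cases "i < n \<and> i \<noteq> star a")
    case True
    then show ?thesis using mem_diffs_xor[OF assms(1-3)] assms(4,5) by auto
  next
    case False
    then show ?thesis using assms nth_star[OF assms(2)] nth_star[OF assms(3)] unfolding diffs_def by auto
  qed
qed

text \<open>Three words with a common star cannot be pairwise at distance 3, since by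
  \<open>diffs_same_star\<close> and \<open>card_sym_diff\<close> the three distances have even sum.\<close>

lemma star_class_has_dist_4:
  assumes "3 \<le> card (star_class r)"
  obtains a b where "a \<in> star_class r" "b \<in> star_class r" "card (diffs a b) = 4"
proof -
  have "\<exists>a\<in>star_class r. \<exists>b\<in>star_class r. card (diffs a b) = 4"
  proof (rule ccontr)
    assume no4: "\<not> ?thesis"
    have "card (star_class r) \<le> 2"
    proof (rule card_le_2_if_no_three_distinct)
      fix x y z assume xyz: "x \<in> star_class r" "y \<in> star_class r" "z \<in> star_class r"
        and "x \<noteq> y" "x \<noteq> z" "y \<noteq> z"
      then have D: "x \<in> D" "y \<in> D" "z \<in> D" "star y = star x" "star z = star x"
        and three: "card (diffs x y) = 3" "card (diffs x z) = 3" "card (diffs y z) = 3"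
        using card_diffs_3_or_4 no4 unfolding star_class_def by auto
      show False
        using card_sym_diff[OF finite_diffs finite_diffs, of x y x z] diffs_same_star[OF D] three
        by presburger
    qed
    then show False using assms by simp
  qed
  then show ?thesis using that by blast
qed

end

section \<open>Words relative to two words with a common star\<close>

locale star_pair = code34 +
  fixes u u' :: "sym list"
  assumes u_in_D: "u \<in> D" and u'_in_D: "u' \<in> D" and u_neq_u': "u \<noteq> u'"
    and star_u'_eq: "star u' = star u"
begin

definition p :: nat where "p = star u"

definition S :: "nat set" where "S = diffs u u'"

definition T :: "nat set" where "T = {..<n} - S - {p}"

text \<open>The star of \<open>a\<close> is excluded from \<open>Q a\<close> and \<open>M a\<close>: there \<open>a\<close> differs from \<open>u\<close> exactly
  when its star is not \<open>p\<close>.\<close>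

definition Q :: "sym list \<Rightarrow> nat set" where "Q a = diffs u a \<inter> (S - {star a})"

definition M :: "sym list \<Rightarrow> nat set" where "M a = diffs u a \<inter> (T - {star a})"

lemma p_less: "p < n"
  using star_less u_in_D unfolding p_def by simp

lemma star_u: "star u = p" and star_u': "star u' = p"
  using star_u'_eq unfolding p_def by simp_all

lemma p_notin_S: "p \<notin> S"
  using star_notin_diffs[OF u_in_D u'_in_D] star_u'_eq unfolding S_def p_def by simp

lemma S_subset: "S \<subseteq> {..<n}"
  unfolding S_def by (rule diffs_subset)

lemma finite_S: "finite S" and finite_T: "finite T"
  using S_subset finite_subset unfolding T_def by auto

lemma card_S: "card S = 3 \<or> card S = 4"
  unfolding S_def using card_diffs_3_or_4 u_in_D u'_in_D u_neq_u' by simp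

lemma mem_T: "i \<in> T \<longleftrightarrow> i < n \<and> i \<notin> S \<and> i \<noteq> p"
  unfolding T_def by auto

lemma S_T_disjoint: "S \<inter> T = {}"
  unfolding T_def by auto

lemma card_T: "card T = n - card S - 1"
proof -
  have "card ({..<n} - S) = n - card S" using S_subset finite_S by (simp add: card_Diff_subset)
  moreover have "p \<in> {..<n} - S" using p_less p_notin_S by simp
  ultimately show ?thesis unfolding T_def by (simp add: card_Diff_singleton)
qed

lemma Q_subset: "Q a \<subseteq> S - {star a}" and M_subset: "M a \<subseteq> T - {star a}"
  unfolding Q_def M_def by auto

lemma finite_Q: "finite (Q a)" and finite_M: "finite (M a)"
  using finite_S finite_T unfolding Q_def M_def by auto

lemma mem_diffs_xor_u:
  assumes "a \<in> D" "b \<in> D" "i < n" "i \<noteq> p" "i \<noteq> star a" "i \<noteq> star b"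
  shows "i \<in> diffs a b \<longleftrightarrow> (i \<in> diffs u a) \<noteq> (i \<in> diffs u b)"
  using mem_diffs_xor[OF u_in_D assms(1-3)] assms(4-6) star_u by simp

lemma mem_diffs_off_stars:
  assumes "a \<in> D" "b \<in> D" "i \<noteq> p" "i \<noteq> star a" "i \<noteq> star b"
  shows "i \<in> diffs a b \<longleftrightarrow> i \<in> sym_diff (Q a) (Q b) \<union> sym_diff (M a) (M b)"
proof (cases "i < n")
  case True
  then have "i \<in> S \<or> i \<in> T" using assms(3) mem_T by blast
  then show ?thesis
    using mem_diffs_xor_u[OF assms(1,2) True assms(3-5)] assms(4,5) S_T_disjoint
    unfolding Q_def M_def by blast
next
  case False
  then show ?thesis
    using Q_subset[of a] Q_subset[of b] M_subset[of a] M_subset[of b] S_subset mem_T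
    by (auto simp: mem_diffs)
qed

lemma diffs_stars:
  assumes "b \<in> D" "star b = p" "a \<in> D"
  shows "diffs b a \<inter> {p, star a} = (if star a = p then {} else {p, star a})"
  using star_in_diffs[OF assms(1,3)] star_notin_diffs[OF assms(1,3)] assms(2) by auto

lemma card_diffs_split:
  assumes "a \<in> D"
  shows "card (diffs b a) = card (diffs b a \<inter> {p, star a}) + card (diffs b a \<inter> (S - {star a}))
    + card (diffs b a \<inter> (T - {star a}))"
  by (rule card_split_disjoint3[OF finite_diffs])
    (use diffs_subset mem_T p_notin_S S_T_disjoint in \<open>auto simp: mem_diffs\<close>)

text \<open>Away from the stars, \<open>u'\<close> is the complement of \<open>u\<close> on \<open>S\<close> and agrees with it elsewhere.\<close>

lemma card_diffs_u:
  assumes "a \<in> D"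
  shows "card (diffs u a) = (if star a = p then 0 else 2) + card (Q a) + card (M a)"
  using card_diffs_split[OF assms, of u] diffs_stars[OF u_in_D star_u assms]
  unfolding Q_def M_def by (simp add: insert_commute)

lemma card_diffs_u':
  assumes "a \<in> D"
  shows "card (diffs u' a) = (if star a = p then 0 else 2) + (card (S - {star a}) - card (Q a)) + card (M a)"
proof -
  have flip: "i \<in> diffs u' a \<longleftrightarrow> (i \<in> S) \<noteq> (i \<in> diffs u a)"
    if "i < n" "i \<noteq> p" "i \<noteq> star a" for i
    using mem_diffs_xor_u[OF u'_in_D assms that(1,2) _ that(3)] star_u' that(2) unfolding S_def by simp
  have "diffs u' a \<inter> (S - {star a}) = S - {star a} - Q a"
    using flip p_notin_S S_subset unfolding Q_def by auto
  moreover have "diffs u' a \<inter> (T - {star a}) = M a"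
    using flip mem_T unfolding M_def by auto
  moreover have "card (S - {star a} - Q a) = card (S - {star a}) - card (Q a)"
    using Q_subset finite_S by (simp add: card_Diff_subset finite_Q)
  ultimately show ?thesis
    using card_diffs_split[OF assms, of u'] diffs_stars[OF u'_in_D star_u' assms] by simp
qed

text \<open>Both distances lie in \<open>{3, 4}\<close>, and their sum is \<open>4 + |S - {star a}| + 2 |M a|\<close>.\<close>

lemma off_p_bounds:
  assumes "a \<in> D" "star a \<noteq> p" "3 \<le> card (S - {star a})"
  shows "M a = {}" "1 \<le> card (Q a)" "card (Q a) \<le> 2" "card (S - {star a}) \<le> card (Q a) + 2"
proof -
  have "a \<noteq> u" "a \<noteq> u'" using assms(2) star_u star_u' by auto
  then have "3 \<le> card (diffs u a)" "card (diffs u a) \<le> 4" "3 \<le> card (diffs u' a)" "card (diffs u' a) \<le> 4"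
    using card_diffs_3_or_4[OF u_in_D assms(1)] card_diffs_3_or_4[OF u'_in_D assms(1)] by auto
  moreover have "card (Q a) \<le> card (S - {star a})"
    using Q_subset finite_S by (intro card_mono) auto
  ultimately have "card (M a) = 0" "1 \<le> card (Q a)" "card (Q a) \<le> 2"
    "card (S - {star a}) \<le> card (Q a) + 2"
    using card_diffs_u[OF assms(1)] card_diffs_u'[OF assms(1)] assms(2,3) by auto
  then show "M a = {}" "1 \<le> card (Q a)" "card (Q a) \<le> 2" "card (S - {star a}) \<le> card (Q a) + 2"
    using finite_M by auto
qed

lemma diffs_subset_if_M_empty:
  assumes "a \<in> D" "b \<in> D" "M a = {}" "M b = {}"
  shows "diffs a b \<subseteq> {p, star a, star b} \<union> sym_diff (Q a) (Q b)"
  using mem_diffs_off_stars[OF assms(1,2)] assms(3,4) by blast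

lemma close_words_differ_at_p:
  assumes "a \<in> D" "b \<in> D" "a \<noteq> b" "M a = {}" "M b = {}"
    and "sym_diff (Q a) (Q b) \<subseteq> {star a, star b}"
  shows "star a \<noteq> star b" "a ! p \<noteq> b ! p"
proof -
  have sub: "diffs a b \<subseteq> {p, star a, star b}"
    using diffs_subset_if_M_empty[OF assms(1,2,4,5)] assms(6) by blast
  show "star a \<noteq> star b"
  proof
    assume "star a = star b"
    then have "diffs a b \<subseteq> {p, p}" using sub star_notin_diffs[OF assms(1,2)] by auto
    then show False using eq_if_diffs_subset_pair[OF assms(1,2)] assms(3) by blast
  qed
  show "a ! p \<noteq> b ! p"
  proof
    assume "a ! p = b ! p"
    then have "diffs a b \<subseteq> {star a, star b}" using sub by (auto simp: mem_diffs)
    then show False using eq_if_diffs_subset_pair[OF assms(1,2)] assms(3) by blast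
  qed
qed

definition W :: "sym list set" where "W = {a \<in> D. star a \<noteq> p \<and> star a \<notin> S}"

lemma finite_W: "finite W"
  using finite_D unfolding W_def by simp

lemma W_props:
  assumes "a \<in> W"
  shows "a \<in> D" "star a \<noteq> p" "star a \<in> T" "M a = {}" "Q a \<subseteq> S" "card (Q a) \<le> 2"
    "card (S - Q a) \<le> 2"
proof -
  have a: "a \<in> D" "star a \<noteq> p" "star a \<notin> S" using assms unfolding W_def by auto
  then have S_eq: "S - {star a} = S" by simp
  note bounds = off_p_bounds[OF a(1,2), unfolded S_eq]
  show "a \<in> D" "star a \<noteq> p" by (fact a)+
  show "star a \<in> T" using a star_less mem_T by simp
  show "M a = {}" "card (Q a) \<le> 2" using bounds card_S by auto
  show "Q a \<subseteq> S" using Q_subset by blast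
  then show "card (S - Q a) \<le> 2"
    using bounds card_S finite_S by (auto simp: card_Diff_subset finite_Q)
qed

lemma W_same_Q:
  assumes "a \<in> W" "b \<in> W" "a \<noteq> b" "Q a = Q b"
  shows "star a \<noteq> star b" "a ! p \<noteq> b ! p"
proof -
  note a = W_props[OF assms(1)] and b = W_props[OF assms(2)]
  have "sym_diff (Q a) (Q b) \<subseteq> {star a, star b}" using assms(4) by simp
  from close_words_differ_at_p[OF a(1) b(1) assms(3) a(4) b(4) this]
  show "star a \<noteq> star b" "a ! p \<noteq> b ! p" .
qed

lemma W_compl_Q:
  assumes "a \<in> W" "b \<in> W" "Q b = S - Q a"
  shows "star a = star b"
proof (rule ccontr)
  assume ne: "star a \<noteq> star b"
  note a = W_props[OF assms(1)] and b = W_props[OF assms(2)]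
  have "i \<in> diffs a b" if "i \<in> S" for i
  proof -
    have "i \<noteq> p" "i \<noteq> star a" "i \<noteq> star b"
      using that p_notin_S a(3) b(3) S_T_disjoint by auto
    then show ?thesis
      using mem_diffs_off_stars[OF a(1) b(1)] that assms(3) by blast
  qed
  moreover have "star a \<in> diffs a b" "star b \<in> diffs a b" using star_in_diffs[OF a(1) b(1) ne] .
  ultimately have "insert (star a) (insert (star b) S) \<subseteq> diffs a b" by blast
  then have "card (insert (star a) (insert (star b) S)) \<le> card (diffs a b)"
    by (rule card_mono[OF finite_diffs])
  also have "\<dots> \<le> 4" using card_diffs_le_4[OF a(1) b(1)] .
  finally have "card (insert (star a) (insert (star b) S)) \<le> 4" .
  moreover have "star a \<notin> S" "star b \<notin> S" using a(3) b(3) S_T_disjoint by auto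
  ultimately show False using ne finite_S card_S by auto
qed

lemma W_no_three:
  assumes "a \<in> W" "b \<in> W" "c \<in> W" "a \<noteq> b" "a \<noteq> c" "b \<noteq> c" "Q a = Q b"
    and "Q c = Q a \<or> Q c = S - Q a"
  shows False
  using assms(8)
proof
  assume "Q c = Q a"
  then have "a ! p \<noteq> b ! p" "a ! p \<noteq> c ! p" "b ! p \<noteq> c ! p"
    using W_same_Q(2)[OF assms(1,2,4,7)] W_same_Q(2)[OF assms(1,3,5)] W_same_Q(2)[OF assms(2,3,6)]
      assms(7) by auto
  moreover have "p \<noteq> star a" "p \<noteq> star b" "p \<noteq> star c"
    using W_props(2)[OF assms(1)] W_props(2)[OF assms(2)] W_props(2)[OF assms(3)] by auto
  ultimately show False
    using nth_eq_if_both_neq[OF W_props(1)[OF assms(1)] W_props(1)[OF assms(2)] W_props(1)[OF assms(3)]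
        p_less] by simp
next
  assume "Q c = S - Q a"
  then have "star a = star c" "star b = star c"
    using W_compl_Q[OF assms(1,3)] W_compl_Q[OF assms(2,3)] assms(7) by auto
  then show False using W_same_Q(1)[OF assms(1,2,4,7)] by simp
qed

lemma card_W_compl_pair_le_2:
  assumes "A \<subseteq> S"
  shows "card {a \<in> W. Q a = A \<or> Q a = S - A} \<le> 2"
proof (rule card_le_2_if_no_three_distinct)
  fix x y z
  assume "x \<in> {a \<in> W. Q a = A \<or> Q a = S - A}" "y \<in> {a \<in> W. Q a = A \<or> Q a = S - A}"
    "z \<in> {a \<in> W. Q a = A \<or> Q a = S - A}" and ne: "x \<noteq> y" "x \<noteq> z" "y \<noteq> z"
  then have W: "x \<in> W" "y \<in> W" "z \<in> W"
    and Q: "Q x = A \<or> Q x = S - A" "Q y = A \<or> Q y = S - A" "Q z = A \<or> Q z = S - A"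
    by auto
  have compl: "S - (S - A) = A" using assms by blast
  consider "Q x = Q y" | "Q x = Q z" | "Q y = Q z" using Q by blast
  then show False
  proof cases
    case 1
    then show False using W_no_three[OF W ne 1] Q compl by auto
  next
    case 2
    then show False using W_no_three[OF W(1,3,2) ne(2,1) ne(3)[symmetric] 2] Q compl by auto
  next
    case 3
    then show False
      using W_no_three[OF W(2,3,1) ne(3) ne(1)[symmetric] ne(2)[symmetric] 3] Q compl by auto
  qed
qed

lemma card_W_le_6: "card W \<le> 6"
proof -
  have "S \<noteq> {}" using card_S by auto
  then obtain s0 where s0: "s0 \<in> S" by blast
  define R where "R = {A. A \<subseteq> S \<and> s0 \<in> A \<and> card A \<le> 2 \<and> card (S - A) \<le> 2}"
  have "W \<subseteq> (\<Union>A\<in>R. {a \<in> W. Q a = A \<or> Q a = S - A})"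
  proof
    fix a assume a: "a \<in> W"
    note props = W_props[OF a]
    have compl: "S - (S - Q a) = Q a" using props(5) by blast
    show "a \<in> (\<Union>A\<in>R. {a \<in> W. Q a = A \<or> Q a = S - A})"
    proof (cases "s0 \<in> Q a")
      case True
      then have "Q a \<in> R" using props(5-7) unfolding R_def by simp
      then show ?thesis using a by (intro UN_I[of "Q a"]) simp_all
    next
      case False
      then have "S - Q a \<in> R" using s0 props(6,7) compl unfolding R_def by simp
      then show ?thesis using a compl by (intro UN_I[of "S - Q a"]) simp_all
    qed
  qed
  then have "card W \<le> card (\<Union>A\<in>R. {a \<in> W. Q a = A \<or> Q a = S - A})"
    by (rule card_mono[rotated]) (rule finite_subset[OF _ finite_W], blast)
  also have "\<dots> \<le> card R * 2"
  proof (rule card_UN_le_mult)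
    show "finite R" unfolding R_def using finite_S by simp
    show "card {a \<in> W. Q a = A \<or> Q a = S - A} \<le> 2" if "A \<in> R" for A
      using that card_W_compl_pair_le_2 unfolding R_def by simp
  qed
  finally have "card W \<le> card R * 2" .
  moreover have "card R \<le> 3"
    unfolding R_def using card_small_subsets_containing[OF finite_S s0 card_S] .
  ultimately show ?thesis by simp
qed

lemma card_D_le_16_if_small_classes:
  assumes "\<And>r. card (star_class r) \<le> 2"
  shows "card D \<le> 16"
proof -
  have "D \<subseteq> star_class p \<union> (\<Union>r\<in>S. star_class r) \<union> W"
    unfolding star_class_def W_def by auto
  then have "card D \<le> card (star_class p \<union> (\<Union>r\<in>S. star_class r) \<union> W)"
    using finite_star_class finite_S finite_W by (intro card_mono) auto
  also have "\<dots> \<le> card (star_class p) + card (\<Union>r\<in>S. star_class r) + card W"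
    using card_Un_le[of "star_class p \<union> (\<Union>r\<in>S. star_class r)" W]
      card_Un_le[of "star_class p" "\<Union>r\<in>S. star_class r"] by linarith
  finally have "card D \<le> card (star_class p) + card (\<Union>r\<in>S. star_class r) + card W" .
  moreover have "card (\<Union>r\<in>S. star_class r) \<le> card S * 2"
    using card_UN_le_mult[OF finite_S] assms by blast
  ultimately show ?thesis using assms[of p] card_W_le_6 card_S by linarith
qed

end

section \<open>Two words with a common star at distance 4\<close>

locale star_pair4 = star_pair +
  assumes card_S_4: "card S = 4"
begin

definition Y :: "sym list set" where "Y = star_class p - {u, u'}"

lemma finite_Y: "finite Y"
  using finite_star_class unfolding Y_def by simp

lemma off_p_props:
  assumes "a \<in> D" "star a \<noteq> p"
  shows "M a = {}" "Q a \<noteq> {}" "card (Q a) \<le> 2" "star a \<notin> S \<Longrightarrow> card (Q a) = 2"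
proof -
  have "3 \<le> card (S - {star a})"
    using card_S_4 finite_S by (cases "star a \<in> S") auto
  note bounds = off_p_bounds[OF assms this]
  show "M a = {}" "card (Q a) \<le> 2" using bounds by simp_all
  show "Q a \<noteq> {}" using bounds(2) by auto
  show "card (Q a) = 2" if "star a \<notin> S" using bounds(3,4) that card_S_4 by simp
qed

lemma Y_props:
  assumes "y \<in> Y"
  shows "y \<in> D" "star y = p" "Q y \<subseteq> S" "card (Q y) = 2" "M y \<subseteq> T" "M y \<noteq> {}" "card (M y) \<le> 2"
proof -
  show y: "y \<in> D" "star y = p" using assms unfolding Y_def star_class_def by auto
  have "y \<noteq> u" "y \<noteq> u'" using assms unfolding Y_def by auto
  then have "3 \<le> card (diffs u y)" "card (diffs u y) \<le> 4" "3 \<le> card (diffs u' y)" "card (diffs u' y) \<le> 4"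
    using card_diffs_3_or_4[OF u_in_D y(1)] card_diffs_3_or_4[OF u'_in_D y(1)] by auto
  moreover have "card (Q y) \<le> 4" using Q_subset finite_S card_S_4 card_mono[of S "Q y"] by auto
  ultimately have "card (Q y) = 2" "card (M y) \<noteq> 0" "card (M y) \<le> 2"
    using card_diffs_u[OF y(1)] card_diffs_u'[OF y(1)] y(2) p_notin_S card_S_4 by auto
  then show "card (Q y) = 2" "M y \<noteq> {}" "card (M y) \<le> 2" by auto
  show "Q y \<subseteq> S" "M y \<subseteq> T" using Q_subset M_subset by blast+
qed

lemma card_diffs_Y:
  assumes "y \<in> Y" "y' \<in> Y"
  shows "card (diffs y y') = card (sym_diff (Q y) (Q y')) + card (sym_diff (M y) (M y'))"
proof -
  note a = Y_props[OF assms(1)] and b = Y_props[OF assms(2)]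
  have "diffs y y' = sym_diff (Q y) (Q y') \<union> sym_diff (M y) (M y')"
  proof (rule set_eqI)
    fix i
    show "i \<in> diffs y y' \<longleftrightarrow> i \<in> sym_diff (Q y) (Q y') \<union> sym_diff (M y) (M y')"
    proof (cases "i = p")
      case True
      then show ?thesis
        using star_notin_diffs[OF a(1) b(1)] a(2,3,5) b(2,3,5) p_notin_S mem_T by auto
    next
      case False
      then show ?thesis using mem_diffs_off_stars[OF a(1) b(1) False] a(2) b(2) by simp
    qed
  qed
  moreover have "sym_diff (Q y) (Q y') \<inter> sym_diff (M y) (M y') = {}"
    using a(3,5) b(3,5) S_T_disjoint by blast
  ultimately show ?thesis using finite_Q finite_M by (simp add: card_Un_disjoint)
qed

lemma Y_off_p_sym_diff_le_2:
  assumes "y \<in> Y" "a \<in> D" "star a \<noteq> p"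
  shows "card (sym_diff (Q y - {star a}) (Q a)) + card (M y - {star a}) \<le> 2"
proof -
  note yp = Y_props[OF assms(1)] and ap = off_p_props[OF assms(2,3)]
  let ?A = "sym_diff (Q y - {star a}) (Q a)" and ?B = "M y - {star a}"
  have in_diffs: "i \<in> diffs y a" if "i \<in> ?A \<union> ?B" for i
  proof -
    have "i \<noteq> p" "i \<noteq> star a"
      using that yp(3,5) Q_subset[of a] p_notin_S mem_T by auto
    moreover have "i \<in> sym_diff (Q y) (Q a) \<union> sym_diff (M y) (M a)"
      using that ap(1) Q_subset[of a] by auto
    ultimately show ?thesis using mem_diffs_off_stars[OF yp(1) assms(2)] yp(2) by simp
  qed
  have "{p, star a} \<union> ?A \<union> ?B \<subseteq> diffs y a"
    using star_in_diffs[OF yp(1) assms(2)] yp(2) assms(3) in_diffs by auto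
  then have "card ({p, star a} \<union> ?A \<union> ?B) \<le> card (diffs y a)"
    by (rule card_mono[OF finite_diffs])
  moreover have "card ({p, star a} \<union> ?A \<union> ?B) = 2 + card ?A + card ?B"
  proof -
    have "{p, star a} \<inter> ?A = {}" "{p, star a} \<inter> ?B = {}" "?A \<inter> ?B = {}"
      using yp(3,5) Q_subset[of a] p_notin_S mem_T S_T_disjoint by auto
    then show ?thesis
      using assms(3) finite_Q finite_M by (simp add: card_Un_disjoint Int_Un_distrib2)
  qed
  ultimately show ?thesis using card_diffs_le_4[OF yp(1) assms(2)] by linarith
qed

lemma diffs_off_p_subset:
  assumes "a \<in> D" "b \<in> D" "star a \<noteq> p" "star b \<noteq> p"
  shows "diffs a b \<subseteq> {p, star a, star b} \<union> sym_diff (Q a) (Q b)"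
  using diffs_subset_if_M_empty[OF assms(1,2)] off_p_props(1) assms by blast

lemma Q_off_p_if_card_M_2:
  assumes "y \<in> Y" "card (M y) = 2" "a \<in> D" "star a \<noteq> p"
  shows "Q a = Q y - {star a}"
proof -
  note yp = Y_props[OF assms(1)] and ap = off_p_props[OF assms(3,4)]
  note close = Y_off_p_sym_diff_le_2[OF assms(1,3,4)]
  show ?thesis
  proof (cases "star a \<in> M y")
    case False
    then have "card (sym_diff (Q y - {star a}) (Q a)) = 0" using close assms(2) by simp
    then show ?thesis using finite_Q by auto
  next
    case True
    then have "star a \<notin> S" using yp(5) S_T_disjoint by blast
    then have "Q y - {star a} = Q y" "card (Q a) = 2" using yp(3) ap(4) by auto
    moreover have "card (M y - {star a}) = 1" using True assms(2) finite_M by simp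
    ultimately have "Q y = Q a"
      using eq_if_card_sym_diff_le_1[OF finite_Q finite_Q, of y a] close yp(4) by simp
    then show ?thesis using \<open>Q y - {star a} = Q y\<close> by simp
  qed
qed

lemma card_off_p_le_2_if_card_M_2:
  assumes "y \<in> Y" "card (M y) = 2"
  shows "card {a \<in> D. star a \<noteq> p} \<le> 2"
proof (rule card_le_2_if_pairwise_nth_neq[OF _ p_less])
  fix a b assume a: "a \<in> {a \<in> D. star a \<noteq> p}" and b: "b \<in> {a \<in> D. star a \<noteq> p}" and "a \<noteq> b"
  moreover have "sym_diff (Q a) (Q b) \<subseteq> {star a, star b}"
    using Q_off_p_if_card_M_2[OF assms] a b by auto
  ultimately show "a ! p \<noteq> b ! p"
    using close_words_differ_at_p(2) off_p_props(1) by simp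
qed auto

definition S_pairs :: "nat set set" where "S_pairs = {A. A \<subseteq> S \<and> card A = 2}"

lemma finite_S_pairs: "finite S_pairs" and card_S_pairs: "card S_pairs = 6"
proof -
  show "finite S_pairs" unfolding S_pairs_def using finite_S by simp
  have "card S_pairs = card S choose 2" unfolding S_pairs_def by (rule n_subsets[OF finite_S])
  then show "card S_pairs = 6" using card_S_4 by (simp add: numeral_eq_Suc)
qed

lemma Q_Y_in_S_pairs: "y \<in> Y \<Longrightarrow> Q y \<in> S_pairs"
  using Y_props unfolding S_pairs_def by auto

lemma compl_in_S_pairs:
  assumes "A \<in> S_pairs"
  shows "S - A \<in> S_pairs" "S - A \<noteq> A"
proof -
  have A: "A \<subseteq> S" "card A = 2" using assms unfolding S_pairs_def by auto
  then have "card (S - A) = 2" using card_S_4 finite_S by (simp add: card_Diff_subset finite_subset)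
  then show "S - A \<in> S_pairs" unfolding S_pairs_def by simp
  show "S - A \<noteq> A"
  proof
    assume "S - A = A"
    then have "A = {}" by blast
    then show False using A(2) by simp
  qed
qed

lemma M_disjoint_if_same_Q:
  assumes "y \<in> Y" "y' \<in> Y" "y \<noteq> y'" "Q y = Q y'"
  shows "M y \<inter> M y' = {}"
proof -
  have "3 \<le> card (sym_diff (M y) (M y'))"
    using card_diffs_Y[OF assms(1,2)] card_diffs_3_or_4[OF Y_props(1)[OF assms(1)] Y_props(1)[OF assms(2)]
        assms(3)] assms(4) by auto
  then have "card (M y \<inter> M y') = 0"
    using card_sym_diff[OF finite_M finite_M, of y y'] Y_props(7)[OF assms(1)] Y_props(7)[OF assms(2)]
    by linarith
  then show ?thesis using finite_M by simp
qed

lemma eq_if_same_Q_card_M_1: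
  assumes "y \<in> Y" "y' \<in> Y" "card (M y) = 1" "card (M y') = 1" "Q y = Q y'"
  shows "y = y'"
proof -
  have "card (diffs y y') = card (sym_diff (M y) (M y'))" using card_diffs_Y[OF assms(1,2)] assms(5) by simp
  also have "\<dots> \<le> 2" using card_sym_diff[OF finite_M finite_M, of y y'] assms(3,4) by linarith
  finally show ?thesis using eq_if_card_diffs_le_2 Y_props(1) assms(1,2) by blast
qed

definition Q_fiber :: "nat set \<Rightarrow> sym list set" where "Q_fiber A = {y \<in> Y. Q y = A}"

text \<open>The sets \<open>M y\<close> of a fiber are disjoint subsets of \<open>T\<close>, and at most one of them is a
  singleton.\<close>

lemma card_Q_fiber: "2 * card (Q_fiber A) \<le> card T + 1"
proof -
  have fin: "finite (Q_fiber A)" using finite_Y unfolding Q_fiber_def by simp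
  have in_Y: "Q_fiber A \<subseteq> Y" unfolding Q_fiber_def by auto
  define F1 where "F1 = {y \<in> Q_fiber A. card (M y) = 1}"
  have F1: "F1 \<subseteq> Q_fiber A" "finite F1" using fin unfolding F1_def by auto
  have "card F1 \<le> Suc 0"
    unfolding card_le_Suc0_iff_eq[OF F1(2)] unfolding F1_def Q_fiber_def
    using eq_if_same_Q_card_M_1 by auto
  have "(\<Sum>y\<in>Q_fiber A. card (M y)) = card (\<Union>y\<in>Q_fiber A. M y)"
    using M_disjoint_if_same_Q fin finite_M unfolding Q_fiber_def by (intro card_UN_disjoint[symmetric]) auto
  also have "\<dots> \<le> card T"
    using Y_props(5) in_Y finite_T by (intro card_mono) auto
  finally have sum_le: "(\<Sum>y\<in>Q_fiber A. card (M y)) \<le> card T" .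
  have "(\<Sum>y\<in>Q_fiber A - F1. 2) \<le> (\<Sum>y\<in>Q_fiber A - F1. card (M y))"
  proof (rule sum_mono)
    fix y assume "y \<in> Q_fiber A - F1"
    then have "y \<in> Y" "card (M y) \<noteq> 1" unfolding F1_def Q_fiber_def by auto
    then show "2 \<le> card (M y)" using Y_props(6) finite_M by (metis One_nat_def card_0_eq less_2_cases not_less)
  qed
  moreover have "(\<Sum>y\<in>F1. card (M y)) = card F1" unfolding F1_def by simp
  moreover have "(\<Sum>y\<in>Q_fiber A. card (M y)) = (\<Sum>y\<in>Q_fiber A - F1. card (M y)) + (\<Sum>y\<in>F1. card (M y))"
    using sum.subset_diff[OF F1(1) fin] by simp
  moreover have "card (Q_fiber A - F1) = card (Q_fiber A) - card F1" "card F1 \<le> card (Q_fiber A)"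
    using card_Diff_subset[OF F1(2,1)] card_mono[OF fin F1(1)] by auto
  ultimately show ?thesis using sum_le \<open>card F1 \<le> Suc 0\<close> by simp
qed

lemma Q_ne_compl_of_fiber:
  assumes "y1 \<in> Q_fiber A" "y2 \<in> Q_fiber A" "y1 \<noteq> y2" "A \<subseteq> S" "y \<in> Y"
  shows "Q y \<noteq> S - A"
proof
  assume Qy: "Q y = S - A"
  have same: "M y = M yj" if "yj \<in> {y1, y2}" for yj
  proof -
    have yj: "yj \<in> Y" "Q yj = A" using that assms(1,2) unfolding Q_fiber_def by auto
    have "sym_diff (Q y) (Q yj) = S" using Qy yj(2) assms(4) by auto
    then have "card (diffs y yj) = 4 + card (sym_diff (M y) (M yj))"
      using card_diffs_Y[OF assms(5) yj(1)] card_S_4 by simp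
    then have "card (sym_diff (M y) (M yj)) = 0"
      using card_diffs_le_4[OF Y_props(1)[OF assms(5)] Y_props(1)[OF yj(1)]] by simp
    then show ?thesis using finite_M by auto
  qed
  have "M y1 = M y2" using same[of y1] same[of y2] by simp
  moreover have "M y1 \<inter> M y2 = {}" "M y1 \<noteq> {}"
    using M_disjoint_if_same_Q assms(1-3) Y_props(6) unfolding Q_fiber_def by auto
  ultimately show False by simp
qed

text \<open>Such a \<open>y\<close> is at distance \<open>2 + |sym_diff (M y) (M y\<^sub>j)|\<close> from each \<open>y\<^sub>j\<close>; as the
  \<open>M y\<^sub>j\<close> are disjoint, \<open>M y\<close> misses one of them, which forces \<open>|M y| = 1\<close>.\<close>

lemma card_M_off_fiber:
  assumes "y1 \<in> Q_fiber A" "y2 \<in> Q_fiber A" "y3 \<in> Q_fiber A" "y1 \<noteq> y2" "y1 \<noteq> y3" "y2 \<noteq> y3"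
    and "A \<in> S_pairs" "y \<in> Y" "Q y \<noteq> A" "Q y \<noteq> S - A"
  shows "card (M y) = 1"
proof -
  have Y: "y1 \<in> Y" "y2 \<in> Y" "y3 \<in> Y" and QA: "Q y1 = A" "Q y2 = A" "Q y3 = A"
    using assms(1-3) unfolding Q_fiber_def by auto
  have disj: "M y1 \<inter> M y2 = {}" "M y1 \<inter> M y3 = {}" "M y2 \<inter> M y3 = {}"
    using M_disjoint_if_same_Q[OF Y(1,2) assms(4)] M_disjoint_if_same_Q[OF Y(1,3) assms(5)]
      M_disjoint_if_same_Q[OF Y(2,3) assms(6)] QA by simp_all
  have "Q y \<subseteq> S" "card (Q y) = 2" "A \<subseteq> S" "card A = 2"
    using Y_props(3,4)[OF assms(8)] assms(7) unfolding S_pairs_def by auto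
  then have "card (sym_diff (Q y) A) = 2"
    using card_sym_diff_of_2_subsets[OF finite_S card_S_4] assms(9,10) by blast
  then have close: "card (sym_diff (M y) (M yj)) \<le> 2" if "yj \<in> Y" "Q yj = A" for yj
    using card_diffs_Y[OF assms(8) that(1)] that(2)
      card_diffs_le_4[OF Y_props(1)[OF assms(8)] Y_props(1)[OF that(1)]] by simp
  have "M y \<inter> M y1 = {} \<or> M y \<inter> M y2 = {} \<or> M y \<inter> M y3 = {}"
  proof (rule ccontr)
    assume "\<not> ?thesis"
    then obtain e1 e2 e3 where e: "e1 \<in> M y \<inter> M y1" "e2 \<in> M y \<inter> M y2" "e3 \<in> M y \<inter> M y3"
      by blast
    then have "e1 \<noteq> e2" "e1 \<noteq> e3" "e2 \<noteq> e3" using disj by blast+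
    then have "card {e1, e2, e3} = 3" by simp
    moreover have "card {e1, e2, e3} \<le> card (M y)"
      using e by (intro card_mono[OF finite_M]) auto
    ultimately show False using Y_props(7)[OF assms(8)] by simp
  qed
  then obtain yj where j: "yj \<in> Y" "Q yj = A" "M y \<inter> M yj = {}" using Y QA by blast
  then have "card (sym_diff (M y) (M yj)) = card (M y) + card (M yj)"
    using card_sym_diff[OF finite_M finite_M, of y yj] by simp
  moreover have "card (M y) \<noteq> 0" "card (M yj) \<noteq> 0"
    using Y_props(6)[OF assms(8)] Y_props(6)[OF j(1)] finite_M by auto
  ultimately show ?thesis using close[OF j(1,2)] by linarith
qed

text \<open>The hypothesis \<open>11 \<le> |T|\<close>, i.e. \<open>16 \<le> n\<close>, is needed when all six fibers have two words.\<close>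

lemma card_Y_le:
  assumes "11 \<le> card T"
  shows "card Y \<le> card T + 1"
proof (cases "\<forall>A\<in>S_pairs. card (Q_fiber A) \<le> 2")
  case True
  have "Y \<subseteq> (\<Union>A\<in>S_pairs. Q_fiber A)" using Q_Y_in_S_pairs unfolding Q_fiber_def by auto
  then have "card Y \<le> card (\<Union>A\<in>S_pairs. Q_fiber A)"
    by (rule card_mono[rotated]) (rule finite_subset[OF _ finite_Y], auto simp: Q_fiber_def)
  also have "\<dots> \<le> card S_pairs * 2"
    using card_UN_le_mult[OF finite_S_pairs] True by blast
  finally show ?thesis using card_S_pairs assms by simp
next
  case False
  then obtain A where A: "A \<in> S_pairs" "3 \<le> card (Q_fiber A)" by (auto simp: not_le)
  obtain y1 y2 y3 where y: "y1 \<in> Q_fiber A" "y2 \<in> Q_fiber A" "y3 \<in> Q_fiber A"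
    "y1 \<noteq> y2" "y1 \<noteq> y3" "y2 \<noteq> y3"
    using A(2) by (rule obtain_three_distinct)
  have outside: "card (M y) = 1" "Q y \<in> S_pairs - {A, S - A}" if "y \<in> Y - Q_fiber A" for y
  proof -
    have "y \<in> Y" "Q y \<noteq> A" using that unfolding Q_fiber_def by auto
    moreover have "Q y \<noteq> S - A"
      using Q_ne_compl_of_fiber[OF y(1,2,4) _ \<open>y \<in> Y\<close>] A(1) unfolding S_pairs_def by blast
    ultimately show "card (M y) = 1" "Q y \<in> S_pairs - {A, S - A}"
      using card_M_off_fiber[OF y A(1)] Q_Y_in_S_pairs by auto
  qed
  have "inj_on Q (Y - Q_fiber A)"
    by (rule inj_onI) (use eq_if_same_Q_card_M_1 outside(1) in blast)
  then have "card (Y - Q_fiber A) \<le> card (S_pairs - {A, S - A})"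
    using outside(2) finite_S_pairs by (intro card_inj_on_le) auto
  also have "\<dots> = 4"
    using compl_in_S_pairs[OF A(1)] A(1) finite_S_pairs card_S_pairs by (simp add: card_Diff_subset)
  finally have "card (Y - Q_fiber A) \<le> 4" .
  moreover have "card Y = card (Q_fiber A) + card (Y - Q_fiber A)"
    using card_Diff_subset[of "Q_fiber A" Y] card_mono[OF finite_Y, of "Q_fiber A"] finite_Y
    unfolding Q_fiber_def by (auto intro: finite_subset)
  ultimately show ?thesis using card_Q_fiber[of A] assms by linarith
qed

lemma card_Y_le_6_if_card_M_1:
  assumes "\<And>y. y \<in> Y \<Longrightarrow> card (M y) = 1"
  shows "card Y \<le> 6"
proof -
  have "inj_on Q Y" by (rule inj_onI) (use eq_if_same_Q_card_M_1 assms in blast)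
  then have "card Y \<le> card S_pairs"
    using Q_Y_in_S_pairs finite_S_pairs by (intro card_inj_on_le) auto
  then show ?thesis using card_S_pairs by simp
qed

lemma diffs_same_star_off_p:
  assumes "a \<in> D" "b \<in> D" "star b = star a" "star a \<noteq> p"
  shows "diffs a b \<subseteq> insert p (sym_diff (Q a) (Q b))"
  using diffs_off_p_subset[OF assms(1,2,4)] star_notin_diffs[OF assms(1,2)] assms(3,4) by auto

lemma same_star_off_p_pair:
  assumes "a \<in> D" "b \<in> D" "a \<noteq> b" "star b = star a" "star a \<noteq> p"
    and "sym_diff (Q a) (Q b) \<subseteq> {x, y}"
  shows "a ! p \<noteq> b ! p" "x \<in> sym_diff (Q a) (Q b)" "y \<in> sym_diff (Q a) (Q b)"
proof -
  have incl: "diffs a b \<subseteq> insert p (sym_diff (Q a) (Q b))"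
    using diffs_same_star_off_p[OF assms(1,2,4,5)] .
  then have sub: "diffs a b \<subseteq> {p, x, y}" using assms(6) by blast
  have "3 \<le> card (diffs a b)" using card_diffs_3_or_4[OF assms(1-3)] by auto
  moreover have "card (diffs a b) \<le> card {p, x, y}" using sub by (intro card_mono) auto
  moreover have "card {p, x, y} \<le> 3" by (simp add: card_insert_if)
  ultimately have "diffs a b = {p, x, y}" "card {p, x, y} = 3"
    using card_subset_eq[OF _ sub] by auto
  moreover from this(2) have "x \<noteq> p" "y \<noteq> p" by (auto simp: card_insert_if split: if_splits)
  ultimately show "a ! p \<noteq> b ! p" "x \<in> sym_diff (Q a) (Q b)" "y \<in> sym_diff (Q a) (Q b)"
    using incl by (auto simp: mem_diffs)
qed

text \<open>Two difference sets of size at least 3 inside the 4-set \<open>insert p (S - {r})\<close> meet in at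
  least two points, so their symmetric difference, the third distance, has size at most 2.\<close>

lemma card_star_class_S_le_2:
  assumes "r \<in> S"
  shows "card (star_class r) \<le> 2"
proof (rule card_le_2_if_no_three_distinct)
  fix x y z
  assume "x \<in> star_class r" "y \<in> star_class r" "z \<in> star_class r" "x \<noteq> y" "x \<noteq> z" "y \<noteq> z"
  then have D: "x \<in> D" "y \<in> D" "z \<in> D" "star y = star x" "star z = star x" "star x = r"
    and dist: "3 \<le> card (diffs x y)" "3 \<le> card (diffs x z)" "3 \<le> card (diffs y z)"
    using card_diffs_3_or_4 unfolding star_class_def by fastforce+
  have off_p: "star x \<noteq> p" using assms p_notin_S D(6) by auto
  define K where "K = insert p (S - {r})"
  have "diffs x y \<subseteq> K" "diffs x z \<subseteq> K"
    using diffs_same_star_off_p[OF D(1,2,4) off_p] diffs_same_star_off_p[OF D(1,3,5) off_p]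
      Q_subset[of x] Q_subset[of y] Q_subset[of z] D(4-6) unfolding K_def by auto
  moreover have "card K = 4" using assms card_S_4 p_notin_S finite_S unfolding K_def by simp
  ultimately have "card (diffs x y \<union> diffs x z) \<le> 4"
    using card_mono[of K] finite_S unfolding K_def by (metis Un_least finite_Diff finite_insert)
  moreover have "card (diffs y z) + 2 * card (diffs x y \<inter> diffs x z) = card (diffs x y) + card (diffs x z)"
    using card_sym_diff[OF finite_diffs finite_diffs, of x y x z] diffs_same_star[OF D(1-5)] by simp
  ultimately show False
    using card_Un_Int[OF finite_diffs finite_diffs, of x y x z] dist by linarith
qed

lemma card_sym_diff_Q_star_class_le_1:
  assumes "y \<in> Y" "card (M y) = 1" "s \<in> S" "w \<in> star_class s"
  shows "card (sym_diff (Q y - {s}) (Q w)) \<le> 1"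
proof -
  have w: "w \<in> D" "star w = s" "star w \<noteq> p" using assms(3,4) p_notin_S unfolding star_class_def by auto
  have "M y - {s} = M y" using Y_props(5)[OF assms(1)] assms(3) S_T_disjoint by blast
  then show ?thesis using Y_off_p_sym_diff_le_2[OF assms(1) w(1,3)] w(2) assms(2) by simp
qed

lemma no_cross_pattern:
  assumes dist: "r \<noteq> a" "r \<noteq> r'" "r \<noteq> b" "a \<noteq> r'" "a \<noteq> b" "r' \<noteq> b"
    and S_eq: "S = {r, a, r', b}"
    and w: "w1 \<in> star_class r" "w2 \<in> star_class r" "Q w1 = {a, r'}" "Q w2 = {a, b}" "w1 ! p \<noteq> w2 ! p"
    and v: "v1 \<in> star_class r'" "v2 \<in> star_class r'" "Q v1 = {r}" "Q v2 = {a}" "v1 ! p \<noteq> v2 ! p"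
  shows False
proof -
  have W: "w1 \<in> D" "w2 \<in> D" "star w1 = r" "star w2 = r"
    and V: "v1 \<in> D" "v2 \<in> D" "star v1 = r'" "star v2 = r'"
    using w(1,2) v(1,2) unfolding star_class_def by auto
  have off_p: "r \<noteq> p" "r' \<noteq> p" "a \<noteq> p" "b \<noteq> p" using S_eq p_notin_S by auto
  have "w1 ! p \<noteq> v2 ! p"
  proof
    assume same_p: "w1 ! p = v2 ! p"
    have "diffs w1 v2 \<subseteq> {p, r, r'} \<union> sym_diff {a, r'} {a}"
      using diffs_off_p_subset[OF W(1) V(2)] W(3) V(4) w(3) v(4) off_p by simp
    then have "diffs w1 v2 \<subseteq> {r, r'}" using same_p by (auto simp: mem_diffs)
    then show False using eq_if_diffs_subset_pair[OF W(1) V(2)] W(3) V(4) dist by auto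
  qed
  moreover have "w2 ! p = v1 ! p"
  proof (rule ccontr)
    assume "w2 ! p \<noteq> v1 ! p"
    then have "p \<in> diffs w2 v1" using p_less by (simp add: mem_diffs)
    moreover have "r \<in> diffs w2 v1" "r' \<in> diffs w2 v1"
      using star_in_diffs[OF W(2) V(1)] W(4) V(3) dist by auto
    moreover have "i \<in> diffs w2 v1" if "i \<in> {a, b}" for i
    proof -
      have "i \<in> sym_diff (Q w2) (Q v1) \<union> sym_diff (M w2) (M v1)" using that w(4) v(3) dist by auto
      moreover have "i \<noteq> p" "i \<noteq> star w2" "i \<noteq> star v1" using that off_p W(4) V(3) dist by auto
      ultimately show ?thesis using mem_diffs_off_stars[OF W(2) V(1)] by simp
    qed
    ultimately have "{p, r, r', a, b} \<subseteq> diffs w2 v1" by auto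
    then have "card {p, r, r', a, b} \<le> card (diffs w2 v1)" by (rule card_mono[OF finite_diffs])
    then show False using card_diffs_le_4[OF W(2) V(1)] dist off_p by simp
  qed
  moreover have "w1 ! p = v1 ! p"
  proof (rule nth_eq_if_both_neq[OF V(2) W(1) V(1) p_less])
    show "p \<noteq> star v2" "p \<noteq> star w1" "p \<noteq> star v1" using off_p W V by auto
    show "v2 ! p \<noteq> w1 ! p" "v2 ! p \<noteq> v1 ! p" using \<open>w1 ! p \<noteq> v2 ! p\<close> v(5) by auto
  qed
  ultimately show False using w(5) by simp
qed

lemma big_star_classes_one_side:
  assumes "y \<in> Y" "card (M y) = 1" "r \<in> Q y" "r' \<in> S - Q y"
  shows "card (star_class r) \<le> 1 \<or> card (star_class r') \<le> 1"
proof (rule ccontr)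
  assume "\<not> ?thesis"
  then have big: "2 \<le> card (star_class r)" "2 \<le> card (star_class r')" by auto
  note yp = Y_props[OF assms(1)]
  have "card (Q y - {r}) = 1" using yp(4) assms(3) finite_Q by simp
  then obtain a where a: "Q y - {r} = {a}" by (rule card_1_singletonE)
  have "card (S - Q y - {r'}) = 1"
    using yp(3,4) assms(4) card_S_4 finite_S by (simp add: card_Diff_subset finite_Q)
  then obtain b where b: "S - Q y - {r'} = {b}" by (rule card_1_singletonE)
  have Qy: "Q y = {r, a}" using a assms(3) by blast
  have SQy: "S - Q y = {r', b}" using b assms(4) by blast
  have dist: "r \<noteq> a" "r \<noteq> r'" "r \<noteq> b" "a \<noteq> r'" "a \<noteq> b" "r' \<noteq> b"
    using a b assms(3,4) by auto
  have S_eq: "S = {r, a, r', b}" using Qy SQy yp(3) by blast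
  have rS: "r \<in> S" "r' \<in> S" using S_eq by auto
  have in_class: "w \<in> D" "star w = t" "star w \<noteq> p" if "w \<in> star_class t" "t \<in> S" for w t
    using that p_notin_S unfolding star_class_def by auto
  have Q_r: "Q w = {a} \<or> Q w = {a, r'} \<or> Q w = {a, b}" if w: "w \<in> star_class r" for w
  proof -
    note wp = off_p_props[OF in_class(1,3)[OF w rS(1)]]
    have close: "card (sym_diff {a} (Q w)) \<le> 1"
      using card_sym_diff_Q_star_class_le_1[OF assms(1,2) rS(1) w] a by simp
    have "a \<in> Q w"
    proof (rule ccontr)
      assume na: "a \<notin> Q w"
      then have "sym_diff {a} (Q w) = insert a (Q w)" by auto
      then show False using close wp(2) finite_Q[of w] na by simp
    qed
    moreover have "Q w - {a} \<subseteq> {r', b}" using Q_subset[of w] in_class(2)[OF w rS(1)] S_eq by auto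
    moreover have "Q w - {a} \<noteq> {r', b}"
    proof
      assume "Q w - {a} = {r', b}"
      then have "card (Q w - {a}) = 2" using dist by simp
      then show False using wp(3) \<open>a \<in> Q w\<close> finite_Q[of w] by simp
    qed
    ultimately show ?thesis by blast
  qed
  have Q_r': "Q v = {r} \<or> Q v = {a} \<or> Q v = {r, a}" if v: "v \<in> star_class r'" for v
  proof -
    note vp = off_p_props[OF in_class(1,3)[OF v rS(2)]]
    have "Q y - {r'} = {r, a}" using Qy dist by auto
    then have close: "card (sym_diff {r, a} (Q v)) \<le> 1"
      using card_sym_diff_Q_star_class_le_1[OF assms(1,2) rS(2) v] by simp
    have "b \<notin> Q v"
    proof
      assume "b \<in> Q v"
      have "\<not> {r, a, b} \<subseteq> Q v"
        using card_mono[OF finite_Q, of "{r, a, b}" v] vp(3) dist by auto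
      then have "{b, r} \<subseteq> sym_diff {r, a} (Q v) \<or> {b, a} \<subseteq> sym_diff {r, a} (Q v)"
        using \<open>b \<in> Q v\<close> dist by auto
      then have "2 \<le> card (sym_diff {r, a} (Q v))"
        using card_mono[of "sym_diff {r, a} (Q v)" "{b, r}"] card_mono[of "sym_diff {r, a} (Q v)" "{b, a}"]
          finite_Q dist by auto
      then show False using close by simp
    qed
    then have "Q v \<subseteq> {r, a}" using Q_subset[of v] in_class(2)[OF v rS(2)] S_eq by auto
    then show ?thesis using vp(2) by blast
  qed
  obtain w1 w2 where w: "w1 \<in> star_class r" "w2 \<in> star_class r" "w1 \<noteq> w2"
    using big(1) by (rule obtain_two_distinct)
  obtain v1 v2 where v: "v1 \<in> star_class r'" "v2 \<in> star_class r'" "v1 \<noteq> v2"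
    using big(2) by (rule obtain_two_distinct)
  have "sym_diff (Q w1) (Q w2) \<subseteq> {r', b}" using Q_r[OF w(1)] Q_r[OF w(2)] by auto
  from same_star_off_p_pair[OF in_class(1)[OF w(1) rS(1)] in_class(1)[OF w(2) rS(1)] w(3) _ _ this]
  have pw: "w1 ! p \<noteq> w2 ! p" "r' \<in> sym_diff (Q w1) (Q w2)" "b \<in> sym_diff (Q w1) (Q w2)"
    using in_class(2,3)[OF w(1) rS(1)] in_class(2)[OF w(2) rS(1)] by simp_all
  have "sym_diff (Q v1) (Q v2) \<subseteq> {r, a}" using Q_r'[OF v(1)] Q_r'[OF v(2)] by auto
  from same_star_off_p_pair[OF in_class(1)[OF v(1) rS(2)] in_class(1)[OF v(2) rS(2)] v(3) _ _ this]
  have pv: "v1 ! p \<noteq> v2 ! p" "r \<in> sym_diff (Q v1) (Q v2)" "a \<in> sym_diff (Q v1) (Q v2)"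
    using in_class(2,3)[OF v(1) rS(2)] in_class(2)[OF v(2) rS(2)] by simp_all
  have "(Q w1 = {a, r'} \<and> Q w2 = {a, b}) \<or> (Q w1 = {a, b} \<and> Q w2 = {a, r'})"
    using Q_r[OF w(1)] Q_r[OF w(2)] pw(2,3) dist by auto
  moreover have "(Q v1 = {r} \<and> Q v2 = {a}) \<or> (Q v1 = {a} \<and> Q v2 = {r})"
    using Q_r'[OF v(1)] Q_r'[OF v(2)] pv(2,3) dist by auto
  moreover note cross = no_cross_pattern[OF dist S_eq]
  ultimately show False
    using cross[OF w(1,2) _ _ pw(1) v(1,2) _ _ pv(1)] cross[OF w(2,1) _ _ pw(1)[symmetric] v(1,2) _ _ pv(1)]
      cross[OF w(1,2) _ _ pw(1) v(2,1) _ _ pv(1)[symmetric]]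
      cross[OF w(2,1) _ _ pw(1)[symmetric] v(2,1) _ _ pv(1)[symmetric]]
    by blast
qed

lemma card_star_in_S_le_6:
  assumes "y \<in> Y" "card (M y) = 1"
  shows "card {a \<in> D. star a \<in> S} \<le> 6"
proof -
  note yp = Y_props[OF assms(1)]
  have half: "card (\<Union>r\<in>R. star_class r) \<le> 2 * k"
    if "R \<subseteq> S" "card R = 2" "\<And>r. r \<in> R \<Longrightarrow> card (star_class r) \<le> k" for R k
    using card_UN_le_mult[of R star_class k] that finite_subset[OF _ finite_S] by auto
  have halves: "Q y \<subseteq> S" "card (Q y) = 2" "S - Q y \<subseteq> S" "card (S - Q y) = 2"
    using yp(3,4) card_S_4 finite_S by (auto simp: card_Diff_subset finite_Q)
  have "{a \<in> D. star a \<in> S} = (\<Union>r\<in>Q y. star_class r) \<union> (\<Union>r\<in>S - Q y. star_class r)"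
    using yp(3) unfolding star_class_def by auto
  then have "card {a \<in> D. star a \<in> S}
      \<le> card (\<Union>r\<in>Q y. star_class r) + card (\<Union>r\<in>S - Q y. star_class r)"
    by (simp add: card_Un_le)
  also have "\<dots> \<le> 6"
  proof -
    consider "\<forall>r\<in>Q y. card (star_class r) \<le> 1" | "\<forall>r\<in>S - Q y. card (star_class r) \<le> 1"
      using big_star_classes_one_side[OF assms] by blast
    then show ?thesis
    proof cases
      case 1
      then show ?thesis
        using half[OF halves(1,2), of 1] half[OF halves(3,4) card_star_class_S_le_2[OF subsetD[OF halves(3)]]]
        by simp
    next
      case 2
      then show ?thesis
        using half[OF halves(1,2) card_star_class_S_le_2[OF subsetD[OF halves(1)]]]
          half[OF halves(3,4), of 1] by simp
    qed
  qed
  finally show ?thesis .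
qed

lemma Q_W_eq_if_card_M_1:
  assumes "y \<in> Y" "card (M y) = 1" "w \<in> W" "M y \<noteq> {star w}"
  shows "Q w = Q y"
proof -
  note yp = Y_props[OF assms(1)] and wp = W_props[OF assms(3)]
  obtain t where t: "M y = {t}" using assms(2) by (rule card_1_singletonE)
  have "star w \<notin> S" using wp(3) S_T_disjoint by blast
  then have "Q y - {star w} = Q y" "card (Q w) = 2"
    using yp(3) off_p_props(4)[OF wp(1,2)] by auto
  moreover have "card (M y - {star w}) = 1" using t assms(4) by auto
  ultimately have "card (sym_diff (Q y) (Q w)) \<le> 1"
    using Y_off_p_sym_diff_le_2[OF assms(1) wp(1,2)] by simp
  then show ?thesis
    using eq_if_card_sym_diff_le_1[OF finite_Q finite_Q, of w y] \<open>card (Q w) = 2\<close> yp(4)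
    by (simp add: Un_commute)
qed

lemma card_W_le_2_if_M_differ:
  assumes "y1 \<in> Y" "y2 \<in> Y" "card (M y1) = 1" "card (M y2) = 1" "M y1 \<noteq> M y2"
  shows "card W \<le> 2"
proof -
  obtain t1 where t1: "M y1 = {t1}" using assms(3) by (rule card_1_singletonE)
  obtain t2 where t2: "M y2 = {t2}" using assms(4) by (rule card_1_singletonE)
  have "y1 \<noteq> y2" using assms(5) by auto
  then have "Q y1 \<noteq> Q y2" using eq_if_same_Q_card_M_1[OF assms(1-4)] by blast
  text \<open>A word of \<open>W\<close> whose star avoids both \<open>M y\<^sub>1\<close> and \<open>M y\<^sub>2\<close> would have
    \<open>Q y\<^sub>1 = Q w = Q y\<^sub>2\<close>.\<close>
  then have "star ` W \<subseteq> {t1, t2}"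
    using Q_W_eq_if_card_M_1[OF assms(1,3)] Q_W_eq_if_card_M_1[OF assms(2,4)] t1 t2 by fastforce
  moreover have "inj_on star W"
  proof (rule inj_onI)
    fix w w' assume w: "w \<in> W" "w' \<in> W" "star w = star w'"
    have "Q w = Q w'"
    proof (cases "star w = t1")
      case True
      then have "M y2 \<noteq> {star w}" "M y2 \<noteq> {star w'}" using t1 t2 assms(5) w(3) by auto
      then show ?thesis using Q_W_eq_if_card_M_1[OF assms(2,4)] w(1,2) by simp
    next
      case False
      then have "M y1 \<noteq> {star w}" "M y1 \<noteq> {star w'}" using t1 w(3) by auto
      then show ?thesis using Q_W_eq_if_card_M_1[OF assms(1,3)] w(1,2) by simp
    qed
    then show "w = w'" using W_same_Q(1)[OF w(1,2)] w(3) by blast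
  qed
  moreover have "card {t1, t2} \<le> 2" by (cases "t1 = t2") auto
  ultimately show ?thesis using card_inj_on_le[of star W "{t1, t2}"] by simp
qed

lemma card_Y_le_2_if_M_equal:
  assumes "\<And>y. y \<in> Y \<Longrightarrow> card (M y) = 1" "\<And>y y'. y \<in> Y \<Longrightarrow> y' \<in> Y \<Longrightarrow> M y = M y'"
  shows "card Y \<le> 2"
proof (rule card_le_2_if_no_three_distinct)
  have compl: "Q y' = S - Q y" if "y \<in> Y" "y' \<in> Y" "y \<noteq> y'" for y y'
  proof -
    note a = Y_props[OF that(1)] and b = Y_props[OF that(2)]
    have "card (diffs y y') = card (sym_diff (Q y) (Q y'))"
      using card_diffs_Y[OF that(1,2)] assms(2)[OF that(1,2)] by simp
    then have "3 \<le> card (sym_diff (Q y) (Q y'))" using card_diffs_3_or_4[OF a(1) b(1) that(3)] by auto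
    then have "card (Q y \<inter> Q y') = 0"
      using card_sym_diff[OF finite_Q finite_Q, of y y'] a(4) b(4) by linarith
    then have "Q y \<inter> Q y' = {}" using finite_Q by simp
    then have "Q y' \<subseteq> S - Q y" using b(3) by blast
    moreover have "card (S - Q y) = 2" using a(3,4) card_S_4 finite_S by (simp add: card_Diff_subset finite_Q)
    ultimately show ?thesis using card_subset_eq[of "S - Q y" "Q y'"] finite_S b(4) by simp
  qed
  fix x y z assume "x \<in> Y" "y \<in> Y" "z \<in> Y" "x \<noteq> y" "x \<noteq> z" "y \<noteq> z"
  then have "Q y = Q z" "y = z \<Longrightarrow> False" using compl[of x y] compl[of x z] by simp_all
  then show False using eq_if_same_Q_card_M_1 assms(1) \<open>y \<in> Y\<close> \<open>z \<in> Y\<close> by blast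
qed

lemma card_star_class_p: "card (star_class p) = card Y + 2"
proof -
  have "{u, u'} \<subseteq> star_class p"
    using u_in_D u'_in_D star_u star_u' unfolding star_class_def by auto
  then show ?thesis
    using card_Diff_subset[of "{u, u'}" "star_class p"] card_mono[OF finite_star_class, of "{u, u'}" p]
      u_neq_u' unfolding Y_def by simp
qed

lemma card_D_split_p: "card D = card (star_class p) + card {a \<in> D. star a \<noteq> p}"
proof -
  have "D = star_class p \<union> {a \<in> D. star a \<noteq> p}" unfolding star_class_def by auto
  then show ?thesis
    using finite_D by (subst (1) \<open>D = _\<close>, intro card_Un_disjoint) (auto simp: star_class_def)
qed

lemma card_D_split_S: "card D = card (star_class p) + card W + card {a \<in> D. star a \<in> S}"
proof -
  have "{a \<in> D. star a \<noteq> p} = W \<union> {a \<in> D. star a \<in> S}" using p_notin_S unfolding W_def by auto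
  moreover have "card (W \<union> {a \<in> D. star a \<in> S}) = card W + card {a \<in> D. star a \<in> S}"
    using finite_W finite_D by (intro card_Un_disjoint) (auto simp: W_def)
  ultimately show ?thesis using card_D_split_p by simp
qed

lemma card_D_le_n_if_big_p_class:
  assumes "3 \<le> card (star_class p)" "16 \<le> n"
  shows "card D \<le> n"
proof -
  have card_T_n: "card T = n - 5" using card_T card_S_4 by simp
  have "Y \<noteq> {}" using assms(1) card_star_class_p by auto
  then obtain y0 where y0: "y0 \<in> Y" by blast
  show ?thesis
  proof (cases "\<exists>y\<in>Y. card (M y) = 2")
    case True
    then obtain y where "y \<in> Y" "card (M y) = 2" by blast
    then have "card {a \<in> D. star a \<noteq> p} \<le> 2" by (rule card_off_p_le_2_if_card_M_2)
    moreover have "card Y \<le> card T + 1" using card_Y_le card_T_n assms(2) by simp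
    ultimately show ?thesis using card_D_split_p card_star_class_p card_T_n assms(2) by linarith
  next
    case False
    have M_1: "card (M y) = 1" if "y \<in> Y" for y
    proof -
      have "card (M y) \<noteq> 0" using Y_props(6)[OF that] finite_M[of y] by simp
      moreover have "card (M y) \<noteq> 2" using False that by blast
      ultimately show ?thesis using Y_props(7)[OF that] by linarith
    qed
    have "card {a \<in> D. star a \<in> S} \<le> 6" using card_star_in_S_le_6[OF y0 M_1[OF y0]] .
    moreover have "card Y + card W \<le> 8"
    proof (cases "\<exists>y1\<in>Y. \<exists>y2\<in>Y. M y1 \<noteq> M y2")
      case True
      then have "card W \<le> 2" using card_W_le_2_if_M_differ M_1 by blast
      then show ?thesis using card_Y_le_6_if_card_M_1[OF M_1] by simp
    next
      case False
      then have "card Y \<le> 2" using card_Y_le_2_if_M_equal[OF M_1] by blast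
      then show ?thesis using card_W_le_6 by simp
    qed
    ultimately show ?thesis using card_D_split_S card_star_class_p assms(2) by linarith
  qed
qed

end

context code34
begin

theorem card_le_n:
  assumes "16 \<le> n"
  shows "card D \<le> n"
proof (cases "inj_on star D")
  case True
  then have "card D = card (star ` D)" by (simp add: card_image)
  also have "\<dots> \<le> card {..<n}" using star_less by (intro card_mono) auto
  finally show ?thesis by simp
next
  case False
  then obtain u u' where uu: "u \<in> D" "u' \<in> D" "u \<noteq> u'" "star u' = star u"
    unfolding inj_on_def by metis
  show ?thesis
  proof (cases "\<exists>r. 3 \<le> card (star_class r)")
    case True
    then obtain r where big: "3 \<le> card (star_class r)" by blast
    then obtain a b where ab: "a \<in> star_class r" "b \<in> star_class r" "card (diffs a b) = 4"
      by (rule star_class_has_dist_4)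
    then have "a \<in> D" "b \<in> D" "a \<noteq> b" "star b = star a" "star a = r"
      unfolding star_class_def diffs_def by auto
    then interpret star_pair n D a b by unfold_locales
    interpret star_pair4 n D a b using ab(3) by unfold_locales (simp add: S_def)
    show ?thesis using card_D_le_n_if_big_p_class big assms \<open>star a = r\<close> by (simp add: p_def)
  next
    case False
    interpret star_pair n D u u' using uu by unfold_locales
    have "card (star_class r) \<le> 2" for r
    proof -
      have "\<not> 3 \<le> card (star_class r)" using False by blast
      then show ?thesis by simp
    qed
    then show ?thesis using card_D_le_16_if_small_classes assms by fastforce
  qed
qed

end

theorem lemma4:
  fixes n :: nat and D :: "sym list set"
  assumes "n \<ge> 16"
    and "D \<subseteq> X n"
    and "\<forall>u\<in>D. \<forall>v\<in>D. u \<noteq> v \<longrightarrow> hamming u v = 3 \<or> hamming u v = 4"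
  shows "card D \<le> n"
proof -
  interpret code34 n D using assms(2,3) by unfold_locales
  show ?thesis using card_le_n assms(1) .
qed

end
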